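(* If $\Delta;\Gamma\vdash M:A$, $\Delta;\Gamma\vdash N:A$ and $\Delta\vdash M\equiv N$ in DCC, then $\vdash M^\circ\equiv N^\circ$ in CC.
   Context: DCC: expressions $x\mid U_i\mid\Pi x{:}A.B\mid L@M\mid\ell_i\{\overline M\}$; label contexts $\Delta::=\cdot\mid\Delta,\ell_i(\{\overline x{:}\overline A\},x{:}A\mapsto L:B)$; substitution with $\ell\{\overline M\}[N/x]=\ell\{\overline{M[N/x]}\}$; reduction $\Delta\vdash\ell\{\overline M\}@N\triangleright L[\overline M/\overline x,N/x]$ when $\ell(\{\overline x{:}\overline A\},x{:}A\mapsto L:B)\in\Delta$; equivalence $\Delta\vdash M\equiv N$: common reduct, or $\Delta\vdash L\triangleright^*\ell\{\overline N\}$, $\Delta\vdash M\triangleright^*M'$, $\ell(\{\overline x{:}\overline A\},x{:}A\mapsto N:B)\in\Delta$, $\Delta\vdash N[\overline N/\overline x]\equiv M'@x$ give $\Delta\vdash L\equiv M$, and symmetrically; typing $\Delta;\Gamma\vdash M:A$ by CC-style rules for variables, $U_i:U_{i+1}$, $\Pi$, application $M@N:B[N/x]$, conversion, plus: if $\Delta;\Gamma$ well formed, $\ell(\{\overline x{:}\overline A\},x{:}A\mapsto M:B)\in\Delta$, $|\overline M|=|\overline x|$, $\Delta;\Gamma\vdash M_k:A_k[M_1/x_1,\dots,M_{k-1}/x_{k-1}]$ for all $k$, then $\Delta;\Gamma\vdash\ell\{\overline M\}:\Pi x{:}A[\overline M/\overline x].B[\overline M/\overline x]$. CC: expressions $x\mid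 U_i\mid\Pi x{:}A.B\mid L\,M\mid\lambda x{:}A.M$; reduction $(\lambda x{:}A.N)\,M\triangleright N[M/x]$; $\vdash M\equiv N$: common reduct, or $L\triangleright^*\lambda x{:}A.L'$, $M\triangleright^*M'$, $\vdash L'\equiv M'\,x$ give $\vdash L\equiv M$, and symmetrically. Backward transformation (relative to $\Delta$, on well-typed terms): $x^\circ=x$, $U_i^\circ=U_i$, $(\Pi x{:}A.B)^\circ=\Pi x{:}A^\circ.B^\circ$, $(M@N)^\circ=M^\circ\,N^\circ$, $(\ell\{\overline M\})^\circ=\lambda x{:}A^\circ[\overline{M^\circ}/\overline x].\,L^\circ[\overline{M^\circ}/\overline x]$ where $\ell(\{\overline x{:}\overline A\},x{:}A\mapsto L:B)\in\Delta$. *)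

theory Defs
  imports Main
begin

text \<open>A label entry is (l, (As, A, L, B)) representing
  l({x_1:A_1,...,x_n:A_n}, x:A |-> L : B), where A_k lives in the context
  x_1..x_(k-1), A in x_1..x_n, and L, B in x_1..x_n, x (x = index 0).
  A label context is a list whose head is the most recently added entry.\<close>

datatype dterm = DVar nat | DU nat | DPi dterm dterm | DApp dterm dterm
  | DLab nat "dterm list"

type_synonym ldef = "dterm list \<times> dterm \<times> dterm \<times> dterm"
type_synonym lctx = "(nat \<times> ldef) list"

definition upr :: "(nat \<Rightarrow> nat) \<Rightarrow> nat \<Rightarrow> nat" where
  "upr r k = (case k of 0 \<Rightarrow> 0 | Suc j \<Rightarrow> Suc (r j))"

fun dren :: "(nat \<Rightarrow> nat) \<Rightarrow> dterm \<Rightarrow> dterm" where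
  "dren r (DVar i) = DVar (r i)"
| "dren r (DU i) = DU i"
| "dren r (DPi A B) = DPi (dren r A) (dren (upr r) B)"
| "dren r (DApp M N) = DApp (dren r M) (dren r N)"
| "dren r (DLab l Ms) = DLab l (map (dren r) Ms)"

definition dlift :: "dterm \<Rightarrow> dterm" where "dlift = dren Suc"

definition dup :: "(nat \<Rightarrow> dterm) \<Rightarrow> nat \<Rightarrow> dterm" where
  "dup \<sigma> k = (case k of 0 \<Rightarrow> DVar 0 | Suc j \<Rightarrow> dlift (\<sigma> j))"

fun dsubst :: "(nat \<Rightarrow> dterm) \<Rightarrow> dterm \<Rightarrow> dterm" where
  "dsubst \<sigma> (DVar i) = \<sigma> i"
| "dsubst \<sigma> (DU i) = DU i"
| "dsubst \<sigma> (DPi A B) = DPi (dsubst \<sigma> A) (dsubst (dup \<sigma>) B)"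
| "dsubst \<sigma> (DApp M N) = DApp (dsubst \<sigma> M) (dsubst \<sigma> N)"
| "dsubst \<sigma> (DLab l Ms) = DLab l (map (dsubst \<sigma>) Ms)"

text \<open>dinst [M_1,...,M_n] substitutes M_1..M_n for x_1..x_n (x_n = index 0)
  and shifts the remaining indices down by n.\<close>
definition dinst :: "dterm list \<Rightarrow> nat \<Rightarrow> dterm" where
  "dinst Ms k = (if k < length Ms then Ms ! (length Ms - Suc k) else DVar (k - length Ms))"

definition dsubst1 :: "dterm \<Rightarrow> dterm \<Rightarrow> dterm" where
  "dsubst1 N M = dsubst (dinst [N]) M"   \<comment> \<open>M[N/x], x = index 0\<close>

inductive dstep :: "lctx \<Rightarrow> dterm \<Rightarrow> dterm \<Rightarrow> bool" for \<Delta> where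
  lab_beta: "(l, (As, A, L, B)) \<in> set \<Delta> \<Longrightarrow> length Ms = length As \<Longrightarrow>
     dstep \<Delta> (DApp (DLab l Ms) N) (dsubst (dinst (Ms @ [N])) L)"
| pi1: "dstep \<Delta> A A' \<Longrightarrow> dstep \<Delta> (DPi A B) (DPi A' B)"
| pi2: "dstep \<Delta> B B' \<Longrightarrow> dstep \<Delta> (DPi A B) (DPi A B')"
| app1: "dstep \<Delta> M M' \<Longrightarrow> dstep \<Delta> (DApp M N) (DApp M' N)"
| app2: "dstep \<Delta> N N' \<Longrightarrow> dstep \<Delta> (DApp M N) (DApp M N')"
| lab: "dstep \<Delta> M M' \<Longrightarrow> dstep \<Delta> (DLab l (xs @ M # ys)) (DLab l (xs @ M' # ys))"

definition dsteps :: "lctx \<Rightarrow> dterm \<Rightarrow> dterm \<Rightarrow> bool" where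
  "dsteps \<Delta> = (dstep \<Delta>)\<^sup>*\<^sup>*"

inductive dequiv :: "lctx \<Rightarrow> dterm \<Rightarrow> dterm \<Rightarrow> bool" for \<Delta> where
  common: "dsteps \<Delta> M L \<Longrightarrow> dsteps \<Delta> N L \<Longrightarrow> dequiv \<Delta> M N"
| eta1: "dsteps \<Delta> L (DLab l Ns) \<Longrightarrow> dsteps \<Delta> M M' \<Longrightarrow>
     (l, (As, A, N, B)) \<in> set \<Delta> \<Longrightarrow> length Ns = length As \<Longrightarrow>
     dequiv \<Delta> (dsubst (dup (dinst Ns)) N) (DApp (dlift M') (DVar 0)) \<Longrightarrow>
     dequiv \<Delta> L M"
| eta2: "dsteps \<Delta> L (DLab l Ns) \<Longrightarrow> dsteps \<Delta> M M' \<Longrightarrow>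
     (l, (As, A, N, B)) \<in> set \<Delta> \<Longrightarrow> length Ns = length As \<Longrightarrow>
     dequiv \<Delta> (DApp (dlift M') (DVar 0)) (dsubst (dup (dinst Ns)) N) \<Longrightarrow>
     dequiv \<Delta> M L"

text \<open>Typing contexts: head = innermost variable (index 0).
  The context of a label body x_1:A_1,...,x_n:A_n, x:A is  A # rev As.\<close>

inductive wfL :: "lctx \<Rightarrow> bool"
  and wfC :: "lctx \<Rightarrow> dterm list \<Rightarrow> bool"
  and dtyp :: "lctx \<Rightarrow> dterm list \<Rightarrow> dterm \<Rightarrow> dterm \<Rightarrow> bool"
where
  wfL_nil: "wfL []"
| wfL_cons: "wfL \<Delta> \<Longrightarrow> l \<notin> fst ` set \<Delta> \<Longrightarrow> dtyp \<Delta> (A # rev As) L B \<Longrightarrow>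
     wfL ((l, (As, A, L, B)) # \<Delta>)"
| wfC_nil: "wfL \<Delta> \<Longrightarrow> wfC \<Delta> []"
| wfC_cons: "dtyp \<Delta> \<Gamma> A (DU i) \<Longrightarrow> wfC \<Delta> (A # \<Gamma>)"
| t_var: "wfC \<Delta> \<Gamma> \<Longrightarrow> i < length \<Gamma> \<Longrightarrow> dtyp \<Delta> \<Gamma> (DVar i) ((dlift ^^ Suc i) (\<Gamma> ! i))"
| t_univ: "wfC \<Delta> \<Gamma> \<Longrightarrow> dtyp \<Delta> \<Gamma> (DU i) (DU (Suc i))"
| t_pi: "dtyp \<Delta> \<Gamma> A (DU i) \<Longrightarrow> dtyp \<Delta> (A # \<Gamma>) B (DU i) \<Longrightarrow> dtyp \<Delta> \<Gamma> (DPi A B) (DU i)"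
| t_app: "dtyp \<Delta> \<Gamma> M (DPi A B) \<Longrightarrow> dtyp \<Delta> \<Gamma> N A \<Longrightarrow> dtyp \<Delta> \<Gamma> (DApp M N) (dsubst1 N B)"
| t_conv: "dtyp \<Delta> \<Gamma> M A \<Longrightarrow> dtyp \<Delta> \<Gamma> B (DU i) \<Longrightarrow> dequiv \<Delta> A B \<Longrightarrow> dtyp \<Delta> \<Gamma> M B"
| t_lab: "wfC \<Delta> \<Gamma> \<Longrightarrow> (l, (As, A, L, B)) \<in> set \<Delta> \<Longrightarrow> length Ms = length As \<Longrightarrow>
     (\<forall>k < length Ms. dtyp \<Delta> \<Gamma> (Ms ! k) (dsubst (dinst (take k Ms)) (As ! k))) \<Longrightarrow>
     dtyp \<Delta> \<Gamma> (DLab l Ms) (DPi (dsubst (dinst Ms) A) (dsubst (dup (dinst Ms)) B))"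

datatype cterm = CVar nat | CU nat | CPi cterm cterm | CApp cterm cterm | CLam cterm cterm

fun cren :: "(nat \<Rightarrow> nat) \<Rightarrow> cterm \<Rightarrow> cterm" where
  "cren r (CVar i) = CVar (r i)"
| "cren r (CU i) = CU i"
| "cren r (CPi A B) = CPi (cren r A) (cren (upr r) B)"
| "cren r (CApp M N) = CApp (cren r M) (cren r N)"
| "cren r (CLam A M) = CLam (cren r A) (cren (upr r) M)"

definition clift :: "cterm \<Rightarrow> cterm" where "clift = cren Suc"

definition cup :: "(nat \<Rightarrow> cterm) \<Rightarrow> nat \<Rightarrow> cterm" where
  "cup \<sigma> k = (case k of 0 \<Rightarrow> CVar 0 | Suc j \<Rightarrow> clift (\<sigma> j))"

fun csubst :: "(nat \<Rightarrow> cterm) \<Rightarrow> cterm \<Rightarrow> cterm" where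
  "csubst \<sigma> (CVar i) = \<sigma> i"
| "csubst \<sigma> (CU i) = CU i"
| "csubst \<sigma> (CPi A B) = CPi (csubst \<sigma> A) (csubst (cup \<sigma>) B)"
| "csubst \<sigma> (CApp M N) = CApp (csubst \<sigma> M) (csubst \<sigma> N)"
| "csubst \<sigma> (CLam A M) = CLam (csubst \<sigma> A) (csubst (cup \<sigma>) M)"

definition cinst :: "cterm list \<Rightarrow> nat \<Rightarrow> cterm" where
  "cinst Ms k = (if k < length Ms then Ms ! (length Ms - Suc k) else CVar (k - length Ms))"

inductive cstep :: "cterm \<Rightarrow> cterm \<Rightarrow> bool" where
  beta: "cstep (CApp (CLam A N) M) (csubst (cinst [M]) N)"
| pi1: "cstep A A' \<Longrightarrow> cstep (CPi A B) (CPi A' B)"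
| pi2: "cstep B B' \<Longrightarrow> cstep (CPi A B) (CPi A B')"
| app1: "cstep M M' \<Longrightarrow> cstep (CApp M N) (CApp M' N)"
| app2: "cstep N N' \<Longrightarrow> cstep (CApp M N) (CApp M N')"
| lam1: "cstep A A' \<Longrightarrow> cstep (CLam A M) (CLam A' M)"
| lam2: "cstep M M' \<Longrightarrow> cstep (CLam A M) (CLam A M')"

definition csteps :: "cterm \<Rightarrow> cterm \<Rightarrow> bool" where
  "csteps = cstep\<^sup>*\<^sup>*"

inductive cequiv :: "cterm \<Rightarrow> cterm \<Rightarrow> bool" where
  common: "csteps M L \<Longrightarrow> csteps N L \<Longrightarrow> cequiv M N"
| eta1: "csteps L (CLam A L') \<Longrightarrow> csteps M M' \<Longrightarrow>
     cequiv L' (CApp (clift M') (CVar 0)) \<Longrightarrow> cequiv L M"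
| eta2: "csteps L (CLam A L') \<Longrightarrow> csteps M M' \<Longrightarrow>
     cequiv (CApp (clift M') (CVar 0)) L' \<Longrightarrow> cequiv M L"

text \<open>Looking up a label returns its definition and the label context preceding it
  (under which, in a well-formed label context, its body is typed).\<close>
fun lookup_lab :: "nat \<Rightarrow> lctx \<Rightarrow> (ldef \<times> lctx) option" where
  "lookup_lab l [] = None"
| "lookup_lab l ((l', d) # \<Delta>) = (if l = l' then Some (d, \<Delta>) else lookup_lab l \<Delta>)"

lemma lookup_lab_shorter: "lookup_lab l \<Delta> = Some (d, \<Delta>') \<Longrightarrow> length \<Delta>' < length \<Delta>"
  by (induction l \<Delta> rule: lookup_lab.induct) (auto split: if_splits)

function bwd :: "lctx \<Rightarrow> dterm \<Rightarrow> cterm" where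
  "bwd \<Delta> (DVar i) = CVar i"
| "bwd \<Delta> (DU i) = CU i"
| "bwd \<Delta> (DPi A B) = CPi (bwd \<Delta> A) (bwd \<Delta> B)"
| "bwd \<Delta> (DApp M N) = CApp (bwd \<Delta> M) (bwd \<Delta> N)"
| "bwd \<Delta> (DLab l Ms) =
    (case lookup_lab l \<Delta> of
       None \<Rightarrow> CVar 0
     | Some ((As, A, L, B), \<Delta>') \<Rightarrow>
         CLam (csubst (cinst (map (bwd \<Delta>) Ms)) (bwd \<Delta>' A))
              (csubst (cup (cinst (map (bwd \<Delta>) Ms))) (bwd \<Delta>' L)))"
  by pat_completeness auto
termination
  apply (relation "measures [\<lambda>(\<Delta>, M). length \<Delta>, \<lambda>(\<Delta>, M). size M]")
  apply (auto dest: lookup_lab_shorter)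
  apply (meson le_imp_less_Suc size_list_estimation' order_refl)+
  done

end

theory Submission
  imports Defs
begin

(* The translation turns a label application l{Ms} @ N into a beta-redex whose contractum is the
   translation of the DCC contractum, so DCC reduction is simulated by CC reduction and the
   eta-like rule for labels becomes the eta rule of CC. The crux is that the translation commutes
   with renaming and substitution. This holds for terms whose labels are declared with the right
   arity, in a label context whose translated types and bodies mention only their own parameters
   and do not change when the context is extended; typing guarantees all of this. *)

section \<open>Substitution in CC\<close>

lemma upr_0 [simp]: "upr r 0 = 0" and upr_Suc [simp]: "upr r (Suc j) = Suc (r j)"
  by (simp_all add: upr_def)

lemma cup_0 [simp]: "cup s 0 = CVar 0" and cup_Suc [simp]: "cup s (Suc j) = clift (s j)"
  by (simp_all add: cup_def)

lemma upr_upr: "(\<lambda>i. upr r (upr s i)) = upr (\<lambda>i. r (s i))"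
  by (rule ext) (simp add: upr_def split: nat.split)

lemma cren_cren: "cren r (cren s t) = cren (\<lambda>i. r (s i)) t"
  by (induction t arbitrary: r s) (simp_all add: upr_upr)

lemma cup_CVar_upr: "cup (\<lambda>i. CVar (r i)) = (\<lambda>i. CVar (upr r i))"
  by (rule ext) (simp add: cup_def clift_def split: nat.split)

lemma cren_eq_csubst: "cren r t = csubst (\<lambda>i. CVar (r i)) t"
  by (induction t arbitrary: r) (simp_all add: cup_CVar_upr)

lemma cup_upr: "(\<lambda>i. cup s (upr r i)) = cup (\<lambda>i. s (r i))"
  by (rule ext) (simp add: cup_def split: nat.split)

lemma csubst_cren: "csubst s (cren r t) = csubst (\<lambda>i. s (r i)) t"
  by (induction t arbitrary: r s) (simp_all add: cup_upr)

lemma cren_upr_cup: "(\<lambda>i. cren (upr r) (cup s i)) = cup (\<lambda>i. cren r (s i))"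
  by (rule ext) (simp add: cup_def clift_def cren_cren split: nat.split)

lemma cren_csubst: "cren r (csubst s t) = csubst (\<lambda>i. cren r (s i)) t"
  by (induction t arbitrary: r s) (simp_all add: cren_upr_cup)

lemma cup_CVar: "cup CVar = CVar"
  by (rule ext) (simp add: cup_def clift_def split: nat.split)

lemma csubst_CVar [simp]: "csubst CVar t = t"
  by (induction t) (simp_all add: cup_CVar)

lemma csubst_cup_clift: "csubst (cup s) (clift t) = clift (csubst s t)"
  by (simp add: clift_def csubst_cren cren_csubst)

lemma csubst_cup_cup: "(\<lambda>i. csubst (cup s) (cup r i)) = cup (\<lambda>i. csubst s (r i))"
  by (rule ext) (simp add: cup_def csubst_cup_clift split: nat.split)

lemma csubst_csubst: "csubst s (csubst r t) = csubst (\<lambda>i. csubst s (r i)) t"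
  by (induction t arbitrary: r s) (simp_all add: csubst_cup_cup)

fun cclosed :: "nat \<Rightarrow> cterm \<Rightarrow> bool" where
  "cclosed n (CVar i) = (i < n)"
| "cclosed n (CU i) = True"
| "cclosed n (CPi A B) = (cclosed n A \<and> cclosed (Suc n) B)"
| "cclosed n (CApp M N) = (cclosed n M \<and> cclosed n N)"
| "cclosed n (CLam A M) = (cclosed n A \<and> cclosed (Suc n) M)"

lemma upr_less: "\<forall>i<n. r i < m \<Longrightarrow> \<forall>i<Suc n. upr r i < Suc m"
  by (auto simp: less_Suc_eq_0_disj)

lemma cclosed_cren: "cclosed n t \<Longrightarrow> \<forall>i<n. r i < m \<Longrightarrow> cclosed m (cren r t)"
  by (induction t arbitrary: n m r) (auto dest: upr_less)

lemma cclosed_cup: "\<forall>i<n. cclosed m (s i) \<Longrightarrow> \<forall>i<Suc n. cclosed (Suc m) (cup s i)"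
  by (auto simp: less_Suc_eq_0_disj clift_def intro!: cclosed_cren)

lemma cclosed_csubst: "cclosed n t \<Longrightarrow> \<forall>i<n. cclosed m (s i) \<Longrightarrow> cclosed m (csubst s t)"
  by (induction t arbitrary: n m s) (auto dest: cclosed_cup)

lemma cup_cong: "\<forall>i<n. s i = s' i \<Longrightarrow> \<forall>i<Suc n. cup s i = cup s' i"
  by (auto simp: less_Suc_eq_0_disj)

lemma csubst_cong_cclosed: "cclosed n t \<Longrightarrow> \<forall>i<n. s i = s' i \<Longrightarrow> csubst s t = csubst s' t"
  by (induction t arbitrary: n s s') (auto dest: cup_cong)

lemma cinst_map: "i < length Ms \<Longrightarrow> cinst (map f Ms) i = f (cinst Ms i)"
  by (simp add: cinst_def)

lemma csubst_CLam_cinst: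
  assumes "cclosed (length Ms) A" and "cclosed (Suc (length Ms)) L"
  shows "csubst s (CLam (csubst (cinst Ms) A) (csubst (cup (cinst Ms)) L)) =
    CLam (csubst (cinst (map (csubst s) Ms)) A) (csubst (cup (cinst (map (csubst s) Ms))) L)"
proof -
  have "csubst (\<lambda>i. csubst s (cinst Ms i)) A = csubst (cinst (map (csubst s) Ms)) A"
    using assms(1) by (rule csubst_cong_cclosed) (simp add: cinst_map)
  moreover have "csubst (\<lambda>i. csubst (cup s) (cup (cinst Ms) i)) L =
      csubst (cup (cinst (map (csubst s) Ms))) L"
    using assms(2)
    by (rule csubst_cong_cclosed) (auto simp: less_Suc_eq_0_disj cinst_map csubst_cup_clift)
  ultimately show ?thesis by (simp add: csubst_csubst)
qed

lemma csubst_cinst_cup_cinst: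
  assumes "cclosed (Suc (length Ms)) L"
  shows "csubst (cinst [N]) (csubst (cup (cinst Ms)) L) = csubst (cinst (Ms @ [N])) L"
  unfolding csubst_csubst using assms
proof (rule csubst_cong_cclosed, intro allI impI)
  fix i assume "i < Suc (length Ms)"
  then show "csubst (cinst [N]) (cup (cinst Ms) i) = cinst (Ms @ [N]) i"
    by (cases i) (auto simp: clift_def csubst_cren cinst_def nth_append)
qed

section \<open>Reduction in CC\<close>

lemma rtranclp_map:
  "r\<^sup>*\<^sup>* x y \<Longrightarrow> (\<And>x y. r x y \<Longrightarrow> s (f x) (f y)) \<Longrightarrow> s\<^sup>*\<^sup>* (f x) (f y)"
  by (induction rule: rtranclp_induct) (auto intro: rtranclp.rtrancl_into_rtrancl)

lemma rtranclp_map2: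
  assumes "r\<^sup>*\<^sup>* x x'" and "r\<^sup>*\<^sup>* y y'"
    and "\<And>x x' y. r x x' \<Longrightarrow> r (f x y) (f x' y)" and "\<And>x y y'. r y y' \<Longrightarrow> r (f x y) (f x y')"
  shows "r\<^sup>*\<^sup>* (f x y) (f x' y')"
proof -
  have "r\<^sup>*\<^sup>* (f x y) (f x' y)" using assms(1) by (rule rtranclp_map) (rule assms(3))
  also have "r\<^sup>*\<^sup>* (f x' y) (f x' y')" using assms(2) by (rule rtranclp_map) (rule assms(4))
  finally show ?thesis .
qed

lemma cren_csubst_cinst_single:
  "cren r (csubst (cinst [M]) N) = csubst (cinst [cren r M]) (cren (upr r) N)"
  unfolding cren_csubst csubst_cren
  by (rule arg_cong[where f = "\<lambda>s. csubst s N"])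
    (simp add: fun_eq_iff cinst_def upr_def split: nat.split)

lemma cstep_cren: "cstep M M' \<Longrightarrow> cstep (cren r M) (cren r M')"
  by (induction arbitrary: r rule: cstep.induct)
    (auto simp: cren_csubst_cinst_single intro: cstep.intros)

lemma csteps_refl [simp]: "csteps M M"
  by (simp add: csteps_def)

lemma csteps_trans: "csteps L M \<Longrightarrow> csteps M N \<Longrightarrow> csteps L N"
  unfolding csteps_def by (rule rtranclp_trans)

lemma csteps_cren: "csteps M M' \<Longrightarrow> csteps (cren r M) (cren r M')"
  unfolding csteps_def by (erule rtranclp_map) (rule cstep_cren)

lemma csteps_CPi: "csteps A A' \<Longrightarrow> csteps B B' \<Longrightarrow> csteps (CPi A B) (CPi A' B')"
  unfolding csteps_def by (rule rtranclp_map2[where f = CPi]) (auto intro: cstep.intros)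

lemma csteps_CApp: "csteps M M' \<Longrightarrow> csteps N N' \<Longrightarrow> csteps (CApp M N) (CApp M' N')"
  unfolding csteps_def by (rule rtranclp_map2[where f = CApp]) (auto intro: cstep.intros)

lemma csteps_CLam: "csteps A A' \<Longrightarrow> csteps M M' \<Longrightarrow> csteps (CLam A M) (CLam A' M')"
  unfolding csteps_def by (rule rtranclp_map2[where f = CLam]) (auto intro: cstep.intros)

lemma csteps_cup: "\<forall>i. csteps (s i) (s' i) \<Longrightarrow> \<forall>i. csteps (cup s i) (cup s' i)"
  by (auto simp: cup_def clift_def csteps_cren split: nat.split)

lemma csteps_csubst: "\<forall>i. csteps (s i) (s' i) \<Longrightarrow> csteps (csubst s t) (csubst s' t)"
  by (induction t arbitrary: s s') (auto intro!: csteps_CPi csteps_CApp csteps_CLam dest: csteps_cup)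

lemma csteps_cinst_middle:
  "csteps M M' \<Longrightarrow> \<forall>i. csteps (cinst (xs @ M # ys) i) (cinst (xs @ M' # ys) i)"
  by (auto simp: cinst_def nth_append nth_Cons split: nat.split)

section \<open>Declared labels and the translation\<close>

fun dclosed :: "nat \<Rightarrow> dterm \<Rightarrow> bool" where
  "dclosed n (DVar i) = (i < n)"
| "dclosed n (DU i) = True"
| "dclosed n (DPi A B) = (dclosed n A \<and> dclosed (Suc n) B)"
| "dclosed n (DApp M N) = (dclosed n M \<and> dclosed n N)"
| "dclosed n (DLab l Ms) = (\<forall>M\<in>set Ms. dclosed n M)"

(* Undeclared labels are translated to the junk value CVar 0, which does not commute with
   substitution. *)
fun labels_ok :: "lctx \<Rightarrow> dterm \<Rightarrow> bool" where
  "labels_ok \<Delta> (DVar i) = True"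
| "labels_ok \<Delta> (DU i) = True"
| "labels_ok \<Delta> (DPi A B) = (labels_ok \<Delta> A \<and> labels_ok \<Delta> B)"
| "labels_ok \<Delta> (DApp M N) = (labels_ok \<Delta> M \<and> labels_ok \<Delta> N)"
| "labels_ok \<Delta> (DLab l Ms) =
    ((\<exists>d \<Delta>'. lookup_lab l \<Delta> = Some (d, \<Delta>') \<and> length Ms = length (fst d)) \<and>
     (\<forall>M\<in>set Ms. labels_ok \<Delta> M))"

lemma labels_ok_dren: "labels_ok \<Delta> M \<Longrightarrow> labels_ok \<Delta> (dren r M)"
  by (induction M arbitrary: r) auto

lemma labels_ok_dup: "\<forall>i. labels_ok \<Delta> (s i) \<Longrightarrow> \<forall>i. labels_ok \<Delta> (dup s i)"
  by (auto simp: dup_def dlift_def labels_ok_dren split: nat.split)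

lemma labels_ok_dsubst: "labels_ok \<Delta> M \<Longrightarrow> \<forall>i. labels_ok \<Delta> (s i) \<Longrightarrow> labels_ok \<Delta> (dsubst s M)"
  by (induction M arbitrary: s) (auto dest: labels_ok_dup)

lemma labels_ok_dinst: "\<forall>M\<in>set Ms. labels_ok \<Delta> M \<Longrightarrow> \<forall>i. labels_ok \<Delta> (dinst Ms i)"
  by (auto simp: dinst_def)

lemma lookup_lab_in_dom: "lookup_lab l \<Delta> = Some x \<Longrightarrow> l \<in> fst ` set \<Delta>"
  by (induction l \<Delta> rule: lookup_lab.induct) (auto split: if_splits)

lemma lookup_lab_if_mem:
  "distinct (map fst \<Delta>) \<Longrightarrow> (l, d) \<in> set \<Delta> \<Longrightarrow> \<exists>\<Delta>'. lookup_lab l \<Delta> = Some (d, \<Delta>')"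
  by (induction \<Delta>) (auto, force)

(* bwd translates a label body in the label context preceding its entry, hence the second
   condition. The closedness conditions let substitutions pass through the instantiation at a
   label (csubst_CLam_cinst). *)
definition good_lctx :: "lctx \<Rightarrow> bool" where
  "good_lctx \<Delta> \<longleftrightarrow> distinct (map fst \<Delta>) \<and>
    (\<forall>l As A L B \<Delta>'. lookup_lab l \<Delta> = Some ((As, A, L, B), \<Delta>') \<longrightarrow>
       labels_ok \<Delta> L \<and> bwd \<Delta>' L = bwd \<Delta> L \<and>
       cclosed (length As) (bwd \<Delta>' A) \<and> cclosed (Suc (length As)) (bwd \<Delta> L))"

lemma good_lctx_lookup:
  assumes "good_lctx \<Delta>" and "lookup_lab l \<Delta> = Some ((As, A, L, B), \<Delta>')"
  shows "labels_ok \<Delta> L" and "bwd \<Delta>' L = bwd \<Delta> L"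
    and "cclosed (length As) (bwd \<Delta>' A)" and "cclosed (Suc (length As)) (bwd \<Delta> L)"
  using assms unfolding good_lctx_def by blast+

lemma good_lctx_mem:
  assumes "good_lctx \<Delta>" and "(l, (As, A, L, B)) \<in> set \<Delta>"
  obtains \<Delta>' where "lookup_lab l \<Delta> = Some ((As, A, L, B), \<Delta>')"
  using assms lookup_lab_if_mem unfolding good_lctx_def by blast

lemma bwd_DLab:
  assumes "good_lctx \<Delta>" and "lookup_lab l \<Delta> = Some ((As, A, L, B), \<Delta>')"
  shows "bwd \<Delta> (DLab l Ms) = CLam (csubst (cinst (map (bwd \<Delta>) Ms)) (bwd \<Delta>' A))
    (csubst (cup (cinst (map (bwd \<Delta>) Ms))) (bwd \<Delta> L))"
  using assms good_lctx_lookup(2)[OF assms] by simp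

lemma bwd_dren:
  "good_lctx \<Delta> \<Longrightarrow> labels_ok \<Delta> M \<Longrightarrow> bwd \<Delta> (dren r M) = cren r (bwd \<Delta> M)"
proof (induction M arbitrary: r)
  case (DLab l Ms)
  then obtain As A L B \<Delta>' where lookup: "lookup_lab l \<Delta> = Some ((As, A, L, B), \<Delta>')"
    and "length Ms = length As" by auto
  then have "cclosed (length Ms) (bwd \<Delta>' A)" and "cclosed (Suc (length Ms)) (bwd \<Delta> L)"
    using good_lctx_lookup[OF DLab.prems(1) lookup] by simp_all
  moreover have map_eq: "map (bwd \<Delta> \<circ> dren r) Ms = map (csubst (\<lambda>i. CVar (r i)) \<circ> bwd \<Delta>) Ms"
    using DLab by (auto simp: cren_eq_csubst)
  ultimately show ?case
    by (simp add: bwd_DLab[OF DLab.prems(1) lookup] map_eq cren_eq_csubst[of r "CLam _ _"]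
        csubst_CLam_cinst del: bwd.simps csubst.simps cren.simps)
qed auto

lemma bwd_dlift: "good_lctx \<Delta> \<Longrightarrow> labels_ok \<Delta> M \<Longrightarrow> bwd \<Delta> (dlift M) = clift (bwd \<Delta> M)"
  by (simp add: dlift_def clift_def bwd_dren)

lemma bwd_dup:
  "good_lctx \<Delta> \<Longrightarrow> \<forall>i. labels_ok \<Delta> (s i) \<Longrightarrow> (\<lambda>i. bwd \<Delta> (dup s i)) = cup (\<lambda>i. bwd \<Delta> (s i))"
  by (rule ext) (simp add: dup_def cup_def bwd_dlift split: nat.split)

lemma bwd_dsubst:
  "good_lctx \<Delta> \<Longrightarrow> labels_ok \<Delta> M \<Longrightarrow> \<forall>i. labels_ok \<Delta> (s i) \<Longrightarrow>
    bwd \<Delta> (dsubst s M) = csubst (\<lambda>i. bwd \<Delta> (s i)) (bwd \<Delta> M)"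
proof (induction M arbitrary: s)
  case (DPi A B)
  then show ?case using labels_ok_dup[OF DPi.prems(3)] by (simp add: bwd_dup)
next
  case (DLab l Ms)
  then obtain As A L B \<Delta>' where lookup: "lookup_lab l \<Delta> = Some ((As, A, L, B), \<Delta>')"
    and "length Ms = length As" by auto
  then have "cclosed (length Ms) (bwd \<Delta>' A)" and "cclosed (Suc (length Ms)) (bwd \<Delta> L)"
    using good_lctx_lookup[OF DLab.prems(1) lookup] by simp_all
  moreover have map_eq: "map (bwd \<Delta> \<circ> dsubst s) Ms = map (csubst (\<lambda>i. bwd \<Delta> (s i)) \<circ> bwd \<Delta>) Ms"
    using DLab by auto
  ultimately show ?case
    by (simp add: bwd_DLab[OF DLab.prems(1) lookup] map_eq csubst_CLam_cinst
        del: bwd.simps csubst.simps)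
qed auto

lemma bwd_dinst: "(\<lambda>i. bwd \<Delta> (dinst Ms i)) = cinst (map (bwd \<Delta>) Ms)"
  by (rule ext) (auto simp: dinst_def cinst_def rev_nth)

lemma bwd_dsubst_dinst:
  "good_lctx \<Delta> \<Longrightarrow> labels_ok \<Delta> M \<Longrightarrow> \<forall>N\<in>set Ns. labels_ok \<Delta> N \<Longrightarrow>
    bwd \<Delta> (dsubst (dinst Ns) M) = csubst (cinst (map (bwd \<Delta>) Ns)) (bwd \<Delta> M)"
  by (simp add: bwd_dsubst labels_ok_dinst bwd_dinst)

lemma bwd_dsubst_dup_dinst:
  "good_lctx \<Delta> \<Longrightarrow> labels_ok \<Delta> M \<Longrightarrow> \<forall>N\<in>set Ns. labels_ok \<Delta> N \<Longrightarrow>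
    bwd \<Delta> (dsubst (dup (dinst Ns)) M) = csubst (cup (cinst (map (bwd \<Delta>) Ns))) (bwd \<Delta> M)"
  by (simp add: bwd_dsubst bwd_dup labels_ok_dup labels_ok_dinst bwd_dinst)

lemma cclosed_bwd: "good_lctx \<Delta> \<Longrightarrow> labels_ok \<Delta> M \<Longrightarrow> dclosed n M \<Longrightarrow> cclosed n (bwd \<Delta> M)"
proof (induction M arbitrary: n)
  case (DLab l Ms)
  then obtain As A L B \<Delta>' where lookup: "lookup_lab l \<Delta> = Some ((As, A, L, B), \<Delta>')"
    and "length Ms = length As" by auto
  then have A: "cclosed (length Ms) (bwd \<Delta>' A)" and L: "cclosed (Suc (length Ms)) (bwd \<Delta> L)"
    using good_lctx_lookup[OF DLab.prems(1) lookup] by simp_all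
  have inst: "\<forall>i<length Ms. cclosed n (cinst (map (bwd \<Delta>) Ms) i)"
    using DLab by (auto simp: cinst_def)
  show ?case
    unfolding bwd_DLab[OF DLab.prems(1) lookup]
    using cclosed_csubst[OF A inst] cclosed_csubst[OF L cclosed_cup[OF inst]] by simp
qed auto

section \<open>Simulation of reduction and equivalence\<close>

lemma labels_ok_dstep: "dstep \<Delta> M M' \<Longrightarrow> good_lctx \<Delta> \<Longrightarrow> labels_ok \<Delta> M \<Longrightarrow> labels_ok \<Delta> M'"
proof (induction rule: dstep.induct)
  case (lab_beta l As A L B Ms N)
  obtain \<Delta>' where "lookup_lab l \<Delta> = Some ((As, A, L, B), \<Delta>')"
    using lab_beta.prems(1) lab_beta.hyps(1) by (rule good_lctx_mem)
  then have "labels_ok \<Delta> L" by (rule good_lctx_lookup(1)[OF lab_beta.prems(1)])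
  with lab_beta.prems(2) show ?case by (auto intro!: labels_ok_dsubst labels_ok_dinst)
qed auto

lemma labels_ok_dsteps: "dsteps \<Delta> M M' \<Longrightarrow> good_lctx \<Delta> \<Longrightarrow> labels_ok \<Delta> M \<Longrightarrow> labels_ok \<Delta> M'"
  unfolding dsteps_def by (induction rule: rtranclp_induct) (auto intro: labels_ok_dstep)

lemma bwd_dstep: "dstep \<Delta> M M' \<Longrightarrow> good_lctx \<Delta> \<Longrightarrow> labels_ok \<Delta> M \<Longrightarrow> csteps (bwd \<Delta> M) (bwd \<Delta> M')"
proof (induction rule: dstep.induct)
  case (lab_beta l As A L B Ms N)
  obtain \<Delta>' where lookup: "lookup_lab l \<Delta> = Some ((As, A, L, B), \<Delta>')"
    using lab_beta.prems(1) lab_beta.hyps(1) by (rule good_lctx_mem)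
  note L = good_lctx_lookup(1,4)[OF lab_beta.prems(1) lookup]
  have "cstep (bwd \<Delta> (DApp (DLab l Ms) N))
      (csubst (cinst [bwd \<Delta> N]) (csubst (cup (cinst (map (bwd \<Delta>) Ms))) (bwd \<Delta> L)))"
    unfolding bwd.simps(4) bwd_DLab[OF lab_beta.prems(1) lookup] by (rule cstep.beta)
  also have "csubst (cinst [bwd \<Delta> N]) (csubst (cup (cinst (map (bwd \<Delta>) Ms))) (bwd \<Delta> L)) =
      bwd \<Delta> (dsubst (dinst (Ms @ [N])) L)"
    using lab_beta L by (simp add: csubst_cinst_cup_cinst bwd_dsubst_dinst)
  finally show ?case by (simp add: csteps_def)
next
  case (lab M M' l xs ys)
  then obtain As A L B \<Delta>' where lookup: "lookup_lab l \<Delta> = Some ((As, A, L, B), \<Delta>')"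
    by auto
  from lab have "csteps (bwd \<Delta> M) (bwd \<Delta> M')" by simp
  then have "\<forall>i. csteps (cinst (map (bwd \<Delta>) (xs @ M # ys)) i) (cinst (map (bwd \<Delta>) (xs @ M' # ys)) i)"
    by (simp add: csteps_cinst_middle)
  then show ?case
    unfolding bwd_DLab[OF lab.prems(1) lookup]
    by (intro csteps_CLam csteps_csubst csteps_cup)
qed (auto intro: csteps_CPi csteps_CApp)

lemma bwd_dsteps: "dsteps \<Delta> M M' \<Longrightarrow> good_lctx \<Delta> \<Longrightarrow> labels_ok \<Delta> M \<Longrightarrow> csteps (bwd \<Delta> M) (bwd \<Delta> M')"
  unfolding dsteps_def
proof (induction rule: rtranclp_induct)
  case (step M' M'')
  then have "labels_ok \<Delta> M'" by (simp add: labels_ok_dsteps dsteps_def)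
  with step show ?case by (blast intro: csteps_trans bwd_dstep)
qed simp

lemma bwd_eta_premises:
  assumes good: "good_lctx \<Delta>" and "labels_ok \<Delta> L" and "labels_ok \<Delta> M"
    and "dsteps \<Delta> L (DLab l Ns)" and "dsteps \<Delta> M M'" and mem: "(l, (As, A, N, B)) \<in> set \<Delta>"
  obtains X where "csteps (bwd \<Delta> L) (CLam X (bwd \<Delta> (dsubst (dup (dinst Ns)) N)))"
    and "csteps (bwd \<Delta> M) (bwd \<Delta> M')"
    and "labels_ok \<Delta> (dsubst (dup (dinst Ns)) N)" and "labels_ok \<Delta> (DApp (dlift M') (DVar 0))"
    and "bwd \<Delta> (DApp (dlift M') (DVar 0)) = CApp (clift (bwd \<Delta> M')) (CVar 0)"
proof -
  have Ns: "labels_ok \<Delta> (DLab l Ns)" and M': "labels_ok \<Delta> M'"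
    using assms by (blast intro: labels_ok_dsteps)+
  obtain \<Delta>' where lookup: "lookup_lab l \<Delta> = Some ((As, A, N, B), \<Delta>')"
    using good mem by (rule good_lctx_mem)
  have N: "labels_ok \<Delta> N" by (rule good_lctx_lookup(1)[OF good lookup])
  show thesis
  proof
    show "csteps (bwd \<Delta> L) (CLam (csubst (cinst (map (bwd \<Delta>) Ns)) (bwd \<Delta>' A))
        (bwd \<Delta> (dsubst (dup (dinst Ns)) N)))"
      using bwd_dsteps[OF assms(4) good assms(2)] N Ns
      by (simp add: bwd_DLab[OF good lookup] bwd_dsubst_dup_dinst[OF good] del: bwd.simps)
    show "csteps (bwd \<Delta> M) (bwd \<Delta> M')" using assms by (blast intro: bwd_dsteps)
    show "labels_ok \<Delta> (dsubst (dup (dinst Ns)) N)"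
      using N Ns by (auto intro!: labels_ok_dsubst labels_ok_dup labels_ok_dinst)
    show "labels_ok \<Delta> (DApp (dlift M') (DVar 0))"
      using M' by (simp add: dlift_def labels_ok_dren)
    show "bwd \<Delta> (DApp (dlift M') (DVar 0)) = CApp (clift (bwd \<Delta> M')) (CVar 0)"
      by (simp add: bwd_dlift[OF good M'])
  qed
qed

lemma bwd_dequiv:
  "dequiv \<Delta> M N \<Longrightarrow> good_lctx \<Delta> \<Longrightarrow> labels_ok \<Delta> M \<Longrightarrow> labels_ok \<Delta> N \<Longrightarrow>
    cequiv (bwd \<Delta> M) (bwd \<Delta> N)"
proof (induction rule: dequiv.induct)
  case (common M L N)
  then show ?case by (blast intro: cequiv.common bwd_dsteps)
next
  case (eta1 L l Ns M M' As A N B)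
  from eta1.prems eta1.hyps(1-3) show ?case
    by (rule bwd_eta_premises) (use eta1.IH eta1.prems(1) in \<open>auto intro: cequiv.eta1\<close>)
next
  case (eta2 L l Ns M M' As A N B)
  from eta2.prems(1,3,2) eta2.hyps(1-3) show ?case
    by (rule bwd_eta_premises) (use eta2.IH eta2.prems(1) in \<open>auto intro: cequiv.eta2\<close>)
qed

section \<open>Well-typed terms satisfy the invariants\<close>

lemma dtyp_invariants:
  "wfL \<Delta> \<Longrightarrow> distinct (map fst \<Delta>)"
  "wfC \<Delta> \<Gamma> \<Longrightarrow> wfL \<Delta> \<and> distinct (map fst \<Delta>)"
  "dtyp \<Delta> \<Gamma> M T \<Longrightarrow>
    wfL \<Delta> \<and> distinct (map fst \<Delta>) \<and> wfC \<Delta> \<Gamma> \<and> labels_ok \<Delta> M \<and> dclosed (length \<Gamma>) M"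
proof (induction rule: wfL_wfC_dtyp.inducts)
  case (t_lab \<Delta> \<Gamma> l As A L B Ms)
  then obtain \<Delta>' where "lookup_lab l \<Delta> = Some ((As, A, L, B), \<Delta>')"
    using lookup_lab_if_mem by blast
  with t_lab show ?case by (auto simp: in_set_conv_nth)
qed (auto intro: wfL_wfC_dtyp.intros)

lemma labels_ok_Cons_fresh:
  "l \<notin> fst ` set \<Delta> \<Longrightarrow> labels_ok \<Delta> M \<Longrightarrow> labels_ok ((l, d) # \<Delta>) M"
  by (induction M) (auto dest: lookup_lab_in_dom)

lemma bwd_Cons_fresh:
  "l \<notin> fst ` set \<Delta> \<Longrightarrow> labels_ok \<Delta> M \<Longrightarrow> bwd ((l, d) # \<Delta>) M = bwd \<Delta> M"
proof (induction M)
  case (DLab l' Ms)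
  then obtain d' \<Delta>' where "lookup_lab l' \<Delta> = Some (d', \<Delta>')" by auto
  moreover from this DLab.prems(1) have "l' \<noteq> l" by (auto dest: lookup_lab_in_dom)
  moreover have Ms: "map (bwd ((l, d) # \<Delta>)) Ms = map (bwd \<Delta>) Ms" using DLab by auto
  ultimately show ?case by (cases d') (simp add: Ms del: map_eq_conv)
qed simp_all

inductive_cases wfL_ConsE: "wfL (x # \<Delta>)"
inductive_cases wfC_ConsE: "wfC \<Delta> (A # \<Gamma>)"

lemma wfL_good_lctx: "wfL \<Delta> \<Longrightarrow> good_lctx \<Delta>"
proof (induction \<Delta>)
  case Nil
  then show ?case by (simp add: good_lctx_def)
next
  case (Cons entry \<Delta>)
  obtain l As A L B where entry: "entry = (l, (As, A, L, B))" by (cases entry) auto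
  from Cons.prems obtain fresh: "l \<notin> fst ` set \<Delta>" and wf: "wfL \<Delta>"
    and typ_L: "dtyp \<Delta> (A # rev As) L B"
    unfolding entry by (rule wfL_ConsE) auto
  have good: "good_lctx \<Delta>" using wf by (rule Cons.IH)
  from dtyp_invariants(3)[OF typ_L] obtain i where "dtyp \<Delta> (rev As) A (DU i)"
    and L: "labels_ok \<Delta> L" "dclosed (Suc (length As)) L"
    by (auto elim: wfC_ConsE)
  with dtyp_invariants(3) have A: "labels_ok \<Delta> A" "dclosed (length As) A" by fastforce+
  let ?\<Delta> = "(l, (As, A, L, B)) # \<Delta>"
  have "labels_ok ?\<Delta> L' \<and> bwd \<Delta>' L' = bwd ?\<Delta> L' \<and>
      cclosed (length As') (bwd \<Delta>' A') \<and> cclosed (Suc (length As')) (bwd ?\<Delta> L')"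
    if lookup: "lookup_lab l' ?\<Delta> = Some ((As', A', L', B'), \<Delta>')" for l' As' A' L' B' \<Delta>'
  proof (cases "l' = l")
    case True
    with lookup have "As' = As" "A' = A" "L' = L" "\<Delta>' = \<Delta>" by auto
    with fresh good A L show ?thesis by (simp add: labels_ok_Cons_fresh bwd_Cons_fresh cclosed_bwd)
  next
    case False
    with lookup have "lookup_lab l' \<Delta> = Some ((As', A', L', B'), \<Delta>')" by simp
    from good_lctx_lookup[OF good this] fresh show ?thesis
      by (simp add: labels_ok_Cons_fresh bwd_Cons_fresh)
  qed
  moreover have "distinct (map fst ?\<Delta>)" using good fresh by (simp add: good_lctx_def)
  ultimately show ?case unfolding entry good_lctx_def by blast
qed

theorem lemma3p21:
  assumes "dtyp \<Delta> \<Gamma> M A" and "dtyp \<Delta> \<Gamma> N A" and "dequiv \<Delta> M N"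
  shows "cequiv (bwd \<Delta> M) (bwd \<Delta> N)"
proof -
  from dtyp_invariants(3)[OF assms(1)] have "good_lctx \<Delta>" and "labels_ok \<Delta> M"
    by (auto intro: wfL_good_lctx)
  moreover from dtyp_invariants(3)[OF assms(2)] have "labels_ok \<Delta> N" by simp
  ultimately show ?thesis using assms(3) by (blast intro: bwd_dequiv)
qed

end
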